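(* Let $r \in \mathbb{Z}$ and let $P(r)=(P_{n,k})_{n,k\ge 0}$ be the Riordan array $\left(\frac{1+rx^2}{1+x^2}, \frac{x}{1+x^2}\right)$, i.e. $P_{n,k}=[x^n]\,\frac{1+rx^2}{1+x^2}\left(\frac{x}{1+x^2}\right)^k$. Then for all integers $n,k\ge 0$, $$P_{n,k}=\binom{\frac{n+k}{2}}{k}(-1)^{\frac{n-k}{2}}\frac{1+(-1)^{n-k}}{2}-r\binom{\frac{n+k-2}{2}}{k}(-1)^{\frac{n-k}{2}}\frac{1+(-1)^{n-k}}{2}+r\cdot 0^{n+k},$$ where any term carrying the factor $\frac{1+(-1)^{n-k}}{2}$ is interpreted as $0$ when $n-k$ is odd.
   Context: For a power series $h(x)$, $[x^n]h(x)$ denotes the coefficient of $x^n$. $0^m$ equals $1$ if $m=0$ and $0$ if $m>0$. For an integer $a$ and integer $k\ge 0$, $\binom{a}{k}=\frac{a(a-1)\cdots(a-k+1)}{k!}$ (so $\binom{-1}{0}=1$, and $\binom{a}{k}=0$ when $0\le a<k$). The Riordan array $(g(x),f(x))$ is the lower-triangular matrix with $(n,k)$ entry $[x^n]g(x)f(x)^k$. The matrix $P(r)$ is the coefficient array of the polynomials $P_n(x;r)=\sum_{k} P_{n,k}x^k$ (the restricted Chebyshev–Boubaker polynomials). *)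

theory Defs
  imports Complex_Main "HOL-Computational_Algebra.Formal_Power_Series"
begin

definition riordan :: "rat fps \<Rightarrow> rat fps \<Rightarrow> nat \<Rightarrow> nat \<Rightarrow> rat" where
  "riordan g f n k = fps_nth (g * f ^ k) n"

definition P_entry :: "int \<Rightarrow> nat \<Rightarrow> nat \<Rightarrow> rat" where
  "P_entry r n k = riordan
     ((1 + of_int r * fps_X ^ 2) / (1 + fps_X ^ 2))
     (fps_X / (1 + fps_X ^ 2)) n k"

end

theory Submission
  imports Defs
begin

text \<open>The entries of P(r) are read off from the columns C_k = x^k/(1+x^2)^(k+1) of the
  Riordan array (1/(1+x^2), x/(1+x^2)). These are determined by C_0 (1+x^2) = 1 and
  C_(k+1) (1+x^2) = x C_k, which on coefficients is Pascal's rule; multiplying by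
  1 + r x^2 then adds r times the column shifted by two. In the closed form the upper
  index (n+k-2)/2 of the second binomial is -1 exactly when n = k = 0, where gchoose
  gives 1; the term r 0^(n+k) cancels it.\<close>

definition column_coeff :: "nat \<Rightarrow> nat \<Rightarrow> 'a :: comm_ring_1" where
  "column_coeff k n =
     (if k \<le> n \<and> even (n - k) then (-1) ^ ((n - k) div 2) * of_nat (((n + k) div 2) choose k) else 0)"

definition column_fps :: "nat \<Rightarrow> 'a :: comm_ring_1 fps" where
  "column_fps k = Abs_fps (column_coeff k)"

lemma column_fps_0_mult: "column_fps 0 * (1 + fps_X ^ 2) = (1 :: 'a :: comm_ring_1 fps)"
proof (rule fps_ext)
  fix n
  show "fps_nth (column_fps 0 * (1 + fps_X ^ 2)) n = fps_nth (1 :: 'a fps) n"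
  proof (cases "n < 2")
    case True
    then have "n = 0 \<or> n = 1" by auto
    then show ?thesis by (auto simp: column_fps_def column_coeff_def algebra_simps)
  next
    case False
    then obtain j where "n = Suc (Suc j)" by (metis add_2_eq_Suc le_Suc_ex not_less)
    then show ?thesis
      by (auto simp: column_fps_def column_coeff_def algebra_simps fps_X_power_mult_right_nth
          elim!: evenE)
  qed
qed

lemma column_coeff_Suc_pascal:
  "column_coeff (Suc k) n + (if 2 \<le> n then column_coeff (Suc k) (n - 2) else 0)
     = (if n = 0 then 0 else column_coeff k (n - 1) :: 'a :: comm_ring_1)"
proof (cases "Suc k < n \<and> even (n - Suc k)")
  case False
  then consider "n \<le> k" | "n = Suc k" | "Suc k < n" "odd (n - Suc k)"
    by linarith
  then show ?thesis
  proof cases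
    case 1
    then show ?thesis by (cases n) (auto simp: column_coeff_def)
  next
    case 2
    then show ?thesis by (simp add: column_coeff_def)
  next
    case 3
    then show ?thesis by (auto simp: column_coeff_def)
  qed
next
  case True
  then obtain i where n: "n = Suc k + 2 * Suc i"
    by (metis add_diff_inverse_nat evenE not_less_iff_gr_or_eq less_imp_le_nat
        mult_0_right not0_implies_Suc zero_less_diff)
  have "((Suc k + Suc i) choose Suc k) = ((Suc k + i) choose Suc k) + ((Suc k + i) choose k)"
    by simp
  then show ?thesis
    by (simp add: n column_coeff_def algebra_simps)
qed

lemma column_fps_Suc_mult:
  "column_fps (Suc k) * (1 + fps_X ^ 2) = fps_X * (column_fps k :: 'a :: comm_ring_1 fps)"
proof (rule fps_ext)
  fix n
  have "fps_nth (column_fps (Suc k) * (1 + fps_X ^ 2)) n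
      = column_coeff (Suc k) n + (if 2 \<le> n then column_coeff (Suc k) (n - 2) else (0 :: 'a))"
    by (simp add: column_fps_def algebra_simps fps_X_power_mult_right_nth)
  then show "fps_nth (column_fps (Suc k) * (1 + fps_X ^ 2)) n = fps_nth (fps_X * (column_fps k :: 'a fps)) n"
    by (simp add: column_coeff_Suc_pascal column_fps_def)
qed

lemma column_fps_mult_power:
  "column_fps k * (1 + fps_X ^ 2) ^ Suc k = (fps_X ^ k :: 'a :: comm_ring_1 fps)"
proof (induction k)
  case 0
  then show ?case by (simp add: column_fps_0_mult)
next
  case (Suc k)
  have "column_fps (Suc k) * (1 + fps_X ^ 2) ^ Suc (Suc k)
      = ((column_fps (Suc k) * (1 + fps_X ^ 2)) * (1 + fps_X ^ 2) ^ Suc k :: 'a fps)"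
    by (simp only: power_Suc mult.assoc)
  also have "\<dots> = fps_X * (column_fps k * (1 + fps_X ^ 2) ^ Suc k)"
    by (simp only: column_fps_Suc_mult mult.assoc)
  also have "\<dots> = fps_X * fps_X ^ k"
    by (simp only: Suc.IH)
  finally show ?case by (simp only: power_Suc)
qed

lemma riordan_product_eq_column:
  fixes c :: "'a :: field"
  shows "(1 + fps_const c * fps_X ^ 2) / (1 + fps_X ^ 2) * (fps_X / (1 + fps_X ^ 2)) ^ k
           = (1 + fps_const c * fps_X ^ 2) * column_fps k"
proof -
  let ?B = "1 + fps_X ^ 2 :: 'a fps"
  have "inverse ?B * ?B = 1"
    by (rule inverse_mult_eq_1) simp
  then have unit: "inverse ?B ^ Suc k * ?B ^ Suc k = 1"
    by (metis power_mult_distrib power_one)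
  have "fps_X ^ k * inverse ?B ^ Suc k = column_fps k * (?B ^ Suc k * inverse ?B ^ Suc k)"
    by (simp only: column_fps_mult_power mult.assoc[symmetric])
  also have "\<dots> = column_fps k"
    using unit by (simp add: mult.commute)
  finally have "fps_X ^ k * inverse ?B ^ Suc k = column_fps k" .
  then show ?thesis
    by (simp add: fps_divide_unit power_mult_distrib mult_ac)
qed

lemma P_entry_column_coeff:
  "P_entry r n k = column_coeff k n + (if 2 \<le> n then of_int r * column_coeff k (n - 2) else 0)"
proof -
  have "P_entry r n k = fps_nth ((1 + fps_const (of_int r) * fps_X ^ 2) * column_fps k) n"
    unfolding P_entry_def riordan_def fps_of_int[symmetric] riordan_product_eq_column ..
  also have "\<dots> = fps_nth (column_fps k) n + fps_nth (fps_const (of_int r) * (fps_X ^ 2 * column_fps k)) n"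
    by (simp add: algebra_simps)
  finally show ?thesis
    by (simp add: column_fps_def fps_X_power_mult_nth)
qed

lemma gchoose_of_int_nonneg:
  "0 \<le> a \<Longrightarrow> (of_int a gchoose k :: 'a :: field_char_0) = of_nat (nat a choose k)"
  by (metis binomial_gbinomial int_nat_eq of_int_of_nat_eq)

lemma gchoose_of_int_eq_0:
  "0 \<le> a \<Longrightarrow> a < int k \<Longrightarrow> (of_int a gchoose k :: 'a :: field_char_0) = 0"
  by (simp add: gchoose_of_int_nonneg)

lemma column_coeff_gchoose:
  "column_coeff k n = (if even (int n - int k)
     then (of_int ((int n + int k) div 2) gchoose k) * (-1) powi ((int n - int k) div 2)
     else (0 :: 'a :: field_char_0))"
proof (cases "even (int n - int k)")
  case False
  then have "\<not> (k \<le> n \<and> even (n - k))"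
    by (auto simp: of_nat_diff[symmetric] even_of_nat_iff simp del: of_nat_diff)
  with False show ?thesis by (simp add: column_coeff_def)
next
  case even: True
  show ?thesis
  proof (cases "k \<le> n")
    case True
    with even obtain j where n: "n = k + 2 * j"
      by (metis evenE le_add_diff_inverse even_of_nat_iff of_nat_diff)
    then have "(int n + int k) div 2 = int (k + j)" and "(int n - int k) div 2 = int j"
      by simp_all
    with even show ?thesis
      by (simp only: of_int_of_nat_eq binomial_gbinomial[symmetric] power_int_of_nat)
        (simp add: column_coeff_def n mult.commute)
  next
    case False
    then have "int (k - n) = - (int n - int k)"
      by simp
    with even have "even (k - n)"
      by (metis even_minus even_of_nat_iff)
    with False obtain j where k: "k = n + 2 * j" and "j > 0"
      by (metis evenE le_add_diff_inverse nat_le_linear add_0_right mult_0_right gr0I)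
    then have half: "(int n + int k) div 2 = int (n + j)" and "n + j < k"
      by auto
    with False show ?thesis
      unfolding half of_int_of_nat_eq binomial_gbinomial[symmetric]
      by (simp add: column_coeff_def)
  qed
qed

lemma column_coeff_shift_gchoose:
  assumes "2 \<le> n" and "even (int n - int k)"
  shows "(of_int ((int n + int k - 2) div 2) gchoose k) * (-1) powi ((int n - int k) div 2)
           = - (column_coeff k (n - 2) :: 'a :: field_char_0)"
proof -
  let ?d = "(int (n - 2) - int k) div 2"
  have "even (int (n - 2) - int k)"
    using assms by (simp add: of_nat_diff)
  then have "column_coeff k (n - 2)
      = (of_int ((int (n - 2) + int k) div 2) gchoose k) * ((-1 :: 'a) powi ?d)"
    unfolding column_coeff_gchoose[of k "n - 2"] by (rule if_P)
  moreover have "int (n - 2) + int k = int n + int k - 2" and "(int n - int k) div 2 = ?d + 1"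
    using assms by auto
  moreover have "(-1 :: 'a) powi (?d + 1) = - ((-1) powi ?d)"
    by (simp add: power_int_add)
  ultimately show ?thesis
    by (simp only: mult_minus_right)
qed

lemma gchoose_shift_eq_0:
  assumes "n < 2" and "n + k \<noteq> 0" and "even (int n - int k)"
  shows "(of_int ((int n + int k - 2) div 2) gchoose k :: 'a :: field_char_0) = 0"
proof (rule gchoose_of_int_eq_0)
  from assms(3) obtain m where m: "int n - int k = 2 * m"
    by (elim evenE)
  then have "(int n + int k - 2) div 2 = int n - 1 - m"
    by simp
  with assms(1,2) m show "0 \<le> (int n + int k - 2) div 2" and "(int n + int k - 2) div 2 < int k"
    by linarith+
qed

theorem mainTheorem1:
  fixes r :: int and n k :: nat
  shows "P_entry r n k =
    (if even (int n - int k) then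
        (of_int ((int n + int k) div 2) gchoose k) * (-1) powi ((int n - int k) div 2)
      - of_int r * (of_int ((int n + int k - 2) div 2) gchoose k) * (-1) powi ((int n - int k) div 2)
     else 0)
    + of_int r * 0 ^ (n + k)"
proof (cases "even (int n - int k)")
  case False
  moreover have "odd (int (n - 2) - int k)" if "2 \<le> n"
    using False that by (simp add: of_nat_diff)
  moreover have "n + k \<noteq> 0"
    using False by auto
  ultimately show ?thesis
    by (simp add: P_entry_column_coeff column_coeff_gchoose[of k])
next
  case even: True
  consider "2 \<le> n" | "n + k = 0" | "n < 2" "n + k \<noteq> 0"
    by linarith
  then show ?thesis
  proof cases
    case 1
    then have "(0 :: rat) ^ (n + k) = 0"
      by simp
    with 1 even show ?thesis
      unfolding P_entry_column_coeff mult.assoc column_coeff_shift_gchoose[OF 1 even]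
      by (simp add: column_coeff_gchoose[of k n])
  next
    case 2
    then show ?thesis
      by (simp add: P_entry_column_coeff column_coeff_def)
  next
    case 3
    with even show ?thesis
      unfolding gchoose_shift_eq_0[OF 3 even]
      by (simp add: P_entry_column_coeff column_coeff_gchoose[of k n])
  qed
qed

end
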